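(* Fix $\alpha\in(0,1)$. In the one-sided weakly dependent Gaussian testing model described in the context, suppose $n_1\to\infty$ and $n_1/n\to p_1\in(0,1]$ as $n\to\infty$, and let $\mu_{n_1}=\max\{\mu_i: i\in\mathcal I_1\}$. If $\lim_{n_1\to\infty}\frac{\sqrt{2\log n_1}}{\mu_{n_1}}$ exists and is strictly less than $1$, then for both the adjusted Bonferroni procedure and the Sidak procedure, $\lim_{n\to\infty}AnyPwr=1$.
   Context: $\Phi$ denotes the standard normal distribution function. Let $(\rho_{ij})_{i,j\ge1}$ be a symmetric array with $\rho_{ii}=1$ and $\rho_{ij}\in(-1,1)$ for $i\ne j$, such that for each $n$ the matrix $\Sigma_n=(\rho_{ij})_{1\le i,j\le n}$ is a valid correlation matrix. Put $\rho_m=\sup_{i\ge1}|\rho_{i,\,i+m}|$ and assume the weak dependence condition: $\gamma:=\sup_{m\ge 1}\rho_m<1$ and $\rho_m=o(1/\log m)$ as $m\to\infty$. For each $n$ one observes $(X_1,\dots,X_n)$, jointly Gaussian with $\mathbb{E}X_i=\mu_i$ (the means may depend on $n$), $\mathrm{Var}(X_i)=1$ and correlation matrix $\Sigma_n$. One tests $H_{0i}:\mu_i=0$ versus $H_{1i}:\mu_i>0$, $i=1,\dots,n$. Let $\mathcal I_1=\{i\le n:\mu_i>0\}$ be the set of false nulls (every $\mu_i$ is either $0$ or positive), $n_1=|\mathcal I_1|$. The adjusted Bonferroni procedure rejects $H_{0i}$ iff $X_i>c_{Bon}(n,\alpha):=\Phi^{-1}\bigl(1-\frac{-\log(1-\alpha)}{n}\bigr)$;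 the Sidak procedure rejects $H_{0i}$ iff $X_i>c_{Sid}(n,\alpha):=\Phi^{-1}\bigl((1-\alpha)^{1/n}\bigr)$. For a procedure with common cutoff $c$, $AnyPwr=\mathbb{P}\bigl(X_i>c\text{ for some }i\in\mathcal I_1\bigr)$, the probability of at least one true rejection. *)

theory Defs
  imports "HOL-Probability.Probability"
begin

definition Phi :: "real \<Rightarrow> real" where
  "Phi x = measure (density lborel std_normal_density) {..x}"

definition Phi_inv :: "real \<Rightarrow> real" where
  "Phi_inv p = (THE x. Phi x = p)"

definition gaussian_law :: "'a measure \<Rightarrow> ('a \<Rightarrow> real) \<Rightarrow> real \<Rightarrow> real \<Rightarrow> bool" where
  "gaussian_law M Y m v \<longleftrightarrow>
     (v > 0 \<and> distributed M lborel Y (normal_density m (sqrt v))) \<or>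
     (v = 0 \<and> Y \<in> borel_measurable M \<and> (AE \<omega> in M. Y \<omega> = m))"

definition jointly_gaussian ::
  "'a measure \<Rightarrow> nat set \<Rightarrow> (nat \<Rightarrow> 'a \<Rightarrow> real) \<Rightarrow> (nat \<Rightarrow> real) \<Rightarrow> (nat \<Rightarrow> nat \<Rightarrow> real) \<Rightarrow> bool" where
  "jointly_gaussian M I X mu C \<longleftrightarrow>
     (\<forall>i\<in>I. X i \<in> borel_measurable M) \<and>
     (\<forall>a :: nat \<Rightarrow> real. gaussian_law M (\<lambda>\<omega>. \<Sum>i\<in>I. a i * X i \<omega>)
          (\<Sum>i\<in>I. a i * mu i) (\<Sum>i\<in>I. \<Sum>j\<in>I. a i * a j * C i j))"

definition psd_on :: "nat \<Rightarrow> (nat \<Rightarrow> nat \<Rightarrow> real) \<Rightarrow> bool" where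
  "psd_on n C \<longleftrightarrow> (\<forall>a :: nat \<Rightarrow> real. (\<Sum>i\<in>{1..n}. \<Sum>j\<in>{1..n}. a i * a j * C i j) \<ge> 0)"

definition rho_lag :: "(nat \<Rightarrow> nat \<Rightarrow> real) \<Rightarrow> nat \<Rightarrow> real" where
  "rho_lag \<rho> m = (SUP i\<in>{1..}. \<bar>\<rho> i (i + m)\<bar>)"

definition c_Bon :: "nat \<Rightarrow> real \<Rightarrow> real" where
  "c_Bon n \<alpha> = Phi_inv (1 - (- ln (1 - \<alpha>)) / real n)"

definition c_Sid :: "nat \<Rightarrow> real \<Rightarrow> real" where
  "c_Sid n \<alpha> = Phi_inv ((1 - \<alpha>) powr (1 / real n))"

definition AnyPwr :: "'a measure \<Rightarrow> nat set \<Rightarrow> (nat \<Rightarrow> 'a \<Rightarrow> real) \<Rightarrow> real \<Rightarrow> real" where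
  "AnyPwr M I1 X c = measure M {\<omega> \<in> space M. \<exists>i\<in>I1. X i \<omega> > c}"

end

theory Submission
  imports Defs "HOL-Real_Asymp.Real_Asymp"
begin

text \<open>
  Any-power is at least the power of the single test with the largest mean \<open>\<mu>\<^sub>k = max \<mu>\<^sub>i\<close>,
  namely \<open>1 - \<Phi>(c - \<mu>\<^sub>k)\<close>; the dependence structure of the other coordinates is never used.
  The Gaussian tail bound \<open>1 - \<Phi>(t) \<le> exp(-t\<^sup>2/2)\<close> shows that both cutoffs are
  \<open>\<surd>(2 log n) + O(1)\<close>, and \<open>n \<le> 2 n\<^sub>1/p\<^sub>1\<close> eventually turns this into \<open>\<surd>(2 log n\<^sub>1) + O(1)\<close>.
  Since \<open>\<surd>(2 log n\<^sub>1) \<le> q \<mu>\<^sub>k\<close> for some \<open>q < 1\<close>, the gap \<open>\<mu>\<^sub>k - c \<ge> (1 - q) \<mu>\<^sub>k - O(1)\<close>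
  tends to infinity, and so \<open>\<Phi>(c - \<mu>\<^sub>k) \<rightarrow> 0\<close>.
\<close>

interpretation std_normal: real_distribution std_normal_distribution
  using prob_space_normal_density by (simp add: real_distribution_def real_distribution_axioms_def)

lemma Phi_eq_cdf: "Phi = cdf std_normal_distribution"
  by (simp add: fun_eq_iff Phi_def cdf_def)

lemma isCont_Phi: "isCont Phi x"
proof -
  have "emeasure std_normal_distribution {x} = 0"
    by (simp add: emeasure_density nn_integral_indicator_singleton)
  then show ?thesis
    unfolding Phi_eq_cdf std_normal.isCont_cdf by (simp add: measure_def)
qed

lemma Phi_strict_mono: "strict_mono Phi"
proof
  fix x y :: real
  assume "x < y"
  then have "\<not> (AE z in lborel. z \<notin> {x<..y})"
    by (subst AE_iff_null_sets[symmetric]) (auto simp: null_sets_def)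
  then have "{x<..y} \<notin> null_sets std_normal_distribution"
    by (subst null_sets_density_iff) (auto simp: normal_density_pos less_imp_neq[symmetric])
  then have "measure std_normal_distribution {x<..y} > 0"
    by (simp add: std_normal.emeasure_eq_measure null_sets_def zero_less_measure_iff)
  then show "Phi x < Phi y"
    using std_normal.cdf_diff_eq[OF \<open>x < y\<close>] unfolding Phi_eq_cdf by linarith
qed

lemma Phi_at_bot: "(Phi \<longlongrightarrow> 0) at_bot"
  unfolding Phi_eq_cdf by (rule std_normal.cdf_lim_at_bot)

lemma Phi_at_top: "(Phi \<longlongrightarrow> 1) at_top"
  unfolding Phi_eq_cdf by (rule std_normal.cdf_lim_at_top_prob)

lemma Phi_Phi_inv:
  assumes "0 < p" "p < 1"
  shows "Phi (Phi_inv p) = p"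
proof -
  obtain a where a: "Phi a < p"
    using order_tendstoD(2)[OF Phi_at_bot \<open>0 < p\<close>] by (auto dest: eventually_happens)
  obtain b where b: "p < Phi b" "a \<le> b"
    using eventually_conj[OF order_tendstoD(1)[OF Phi_at_top \<open>p < 1\<close>] eventually_ge_at_top[of a]]
    by (auto dest: eventually_happens)
  obtain x where "Phi x = p"
    using IVT[of Phi a p b] a b isCont_Phi by fastforce
  moreover have "x' = x" if "Phi x' = p" for x'
    using strict_mono_eq[OF Phi_strict_mono] that \<open>Phi x = p\<close> by metis
  ultimately show ?thesis
    unfolding Phi_inv_def by (rule theI)
qed

lemma Phi_inv_le:
  assumes "0 < p" "p < 1" "p \<le> Phi t"
  shows "Phi_inv p \<le> t"
  using assms Phi_Phi_inv strict_mono_less_eq[OF Phi_strict_mono] by (metis linorder_le_cases order_antisym)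

lemma std_normal_upper_tail_le_density:
  assumes "1 \<le> t"
  shows "1 - Phi t \<le> std_normal_density t"
proof -
  have tail: "1 - Phi t = measure std_normal_distribution {t<..}"
    using std_normal.prob_compl[of "{..t}"] by (simp add: Phi_def Compl_eq_Diff_UNIV[symmetric])
  have "emeasure std_normal_distribution {t<..}
      = (\<integral>\<^sup>+z. ennreal (std_normal_density z) * indicator {t<..} z \<partial>lborel)"
    by (simp add: emeasure_density)
  also have "\<dots> \<le> (\<integral>\<^sup>+z. ennreal (z * std_normal_density z) * indicator {t..} z \<partial>lborel)"
    using assms by (intro nn_integral_mono) (auto simp: indicator_def normal_density_pos intro!: ennreal_leI)
  also have "\<dots> = ennreal (0 - (- std_normal_density t))"
  proof (rule nn_integral_FTC_atLeast)
    show "DERIV (\<lambda>z. - std_normal_density z) z :> z * std_normal_density z" for z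
      unfolding std_normal_density_def
      by (auto intro!: derivative_eq_intros simp: field_simps power2_eq_square)
    show "((\<lambda>z. - std_normal_density z) \<longlongrightarrow> 0) at_top"
      unfolding std_normal_density_def by real_asymp
  qed (use assms in \<open>auto simp: normal_density_pos less_imp_le\<close>)
  finally show ?thesis
    unfolding tail by (simp add: std_normal.emeasure_eq_measure)
qed

lemma Phi_inv_le_sqrt_ln:
  assumes "0 < p" "p < 1"
  shows "Phi_inv p \<le> 1 + sqrt (2 * ln (1 / (1 - p)))"
proof (rule Phi_inv_le[OF assms])
  define s where "s = sqrt (2 * ln (1 / (1 - p)))"
  have "0 \<le> s"
    using assms by (simp add: s_def)
  have "1 - Phi (1 + s) \<le> std_normal_density (1 + s)"
    using \<open>0 \<le> s\<close> by (intro std_normal_upper_tail_le_density) simp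
  also have "\<dots> \<le> exp (- (1 + s)\<^sup>2 / 2)"
    using pi_gt3 by (simp add: std_normal_density_def divide_le_eq real_le_rsqrt)
  also have "\<dots> \<le> exp (- s\<^sup>2 / 2)"
    using \<open>0 \<le> s\<close> by (simp add: power_mono)
  also have "\<dots> = 1 - p"
    using assms by (simp add: s_def ln_div)
  finally show "p \<le> Phi (1 + s)"
    by simp
qed

lemma sqrt_ln_mult_le:
  fixes b x :: real
  assumes "0 < b" "1 \<le> x"
  shows "sqrt (2 * ln (b * x)) \<le> sqrt (2 * ln x) + sqrt (2 * \<bar>ln b\<bar>)"
proof -
  have "sqrt (2 * ln (b * x)) \<le> sqrt (2 * ln x + 2 * \<bar>ln b\<bar>)"
    using assms by (simp add: ln_mult)
  also have "\<dots> \<le> sqrt (2 * ln x) + sqrt (2 * \<bar>ln b\<bar>)"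
    using assms by (intro sqrt_add_le_add_sqrt) auto
  finally show ?thesis .
qed

lemma Phi_inv_le_sqrt_two_ln:
  assumes "0 < p" "p < 1" "0 < b" "1 \<le> x" "1 \<le> b * x * (1 - p)"
  shows "Phi_inv p \<le> sqrt (2 * ln x) + (1 + sqrt (2 * \<bar>ln b\<bar>))"
proof -
  have "1 / (1 - p) \<le> b * x"
    using assms by (simp add: field_simps)
  then have "ln (1 / (1 - p)) \<le> ln (b * x)"
    using assms by (intro ln_mono) auto
  then have "Phi_inv p \<le> 1 + sqrt (2 * ln (b * x))"
    using Phi_inv_le_sqrt_ln[OF assms(1,2)] by (smt (verit) real_sqrt_le_mono)
  then show ?thesis
    using sqrt_ln_mult_le[OF assms(3,4)] by linarith
qed

lemma c_Bon_le_sqrt_two_ln: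
  assumes "0 < \<alpha>" "\<alpha> < 1"
  shows "\<exists>K. \<forall>\<^sub>F n in sequentially. c_Bon n \<alpha> \<le> sqrt (2 * ln (real n)) + K"
proof (intro exI)
  define a where "a = - ln (1 - \<alpha>)"
  have "0 < a"
    using assms by (simp add: a_def)
  show "\<forall>\<^sub>F n in sequentially. c_Bon n \<alpha> \<le> sqrt (2 * ln (real n)) + (1 + sqrt (2 * \<bar>ln (1 / a)\<bar>))"
    using eventually_gt_at_top[of "nat \<lceil>max a 1\<rceil>"]
  proof eventually_elim
    case (elim n)
    then have "a < real n" "1 \<le> real n"
      by linarith+
    then show ?case
      unfolding c_Bon_def a_def[symmetric] using \<open>0 < a\<close>
      by (intro Phi_inv_le_sqrt_two_ln) (auto simp: field_simps)
  qed
qed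

lemma c_Sid_le_sqrt_two_ln:
  assumes "0 < \<alpha>" "\<alpha> < 1"
  shows "\<exists>K. \<forall>\<^sub>F n in sequentially. c_Sid n \<alpha> \<le> sqrt (2 * ln (real n)) + K"
proof (intro exI)
  define a where "a = - ln (1 - \<alpha>)"
  have "0 < a"
    using assms by (simp add: a_def)
  show "\<forall>\<^sub>F n in sequentially. c_Sid n \<alpha> \<le> sqrt (2 * ln (real n)) + (1 + sqrt (2 * \<bar>ln (2 / a)\<bar>))"
    using eventually_gt_at_top[of "nat \<lceil>max a 1\<rceil>"]
  proof eventually_elim
    case (elim n)
    define y where "y = a / real n"
    have "a < real n" "1 \<le> real n"
      using elim by linarith+
    then have y: "0 < y" "y \<le> 1"
      using \<open>0 < a\<close> by (auto simp: y_def)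
    have p: "(1 - \<alpha>) powr (1 / real n) = exp (- y)"
      using assms by (simp add: powr_def a_def y_def)
    have "exp (- y) * (1 + y) \<le> 1"
      using exp_ge_add_one_self[of y] y by (simp add: exp_minus field_simps)
    also have "1 \<le> (1 - y / 2) * (1 + y)"
      using y by (simp add: algebra_simps power2_eq_square mult_left_le)
    finally have "exp (- y) \<le> 1 - y / 2"
      using y by simp
    then have "2 / a * real n * (y / 2) \<le> 2 / a * real n * (1 - exp (- y))"
      using \<open>0 < a\<close> by (intro mult_left_mono) auto
    then have "1 \<le> 2 / a * real n * (1 - exp (- y))"
      using \<open>0 < a\<close> \<open>1 \<le> real n\<close> by (simp add: y_def)
    then show ?case
      unfolding c_Sid_def p using \<open>0 < a\<close> \<open>1 \<le> real n\<close> y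
      by (intro Phi_inv_le_sqrt_two_ln) auto
  qed
qed

lemma jointly_gaussian_component:
  assumes "jointly_gaussian M I X mu C" "finite I" "k \<in> I" "0 < C k k"
  shows "distributed M lborel (X k) (normal_density (mu k) (sqrt (C k k)))"
proof -
  define e where "e i = (if i = k then 1 else 0 :: real)" for i
  have select: "(\<Sum>i\<in>I. e i * f i) = f k" for f :: "nat \<Rightarrow> real"
  proof -
    have "(\<Sum>i\<in>I. e i * f i) = (\<Sum>i\<in>I. if i = k then f i else 0)"
      by (rule sum.cong) (simp_all add: e_def)
    then show ?thesis
      using assms(2,3) by simp
  qed
  have "gaussian_law M (\<lambda>\<omega>. \<Sum>i\<in>I. e i * X i \<omega>) (\<Sum>i\<in>I. e i * mu i) (\<Sum>i\<in>I. \<Sum>j\<in>I. e i * e j * C i j)"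
    using assms(1) by (simp add: jointly_gaussian_def)
  then show ?thesis
    using assms(4) by (simp add: select mult.assoc flip: sum_distrib_left) (simp add: gaussian_law_def)
qed

lemma (in prob_space) normal_distributed_prob_le:
  assumes "distributed M lborel Y (normal_density m \<sigma>)" "0 < \<sigma>"
  shows "prob {\<omega> \<in> space M. Y \<omega> \<le> c} = Phi ((c - m) / \<sigma>)"
proof -
  let ?Z = "\<lambda>\<omega>. (Y \<omega> - m) / \<sigma>"
  have Z: "distributed M lborel ?Z std_normal_density"
    using assms normal_standard_normal_convert by blast
  have "{\<omega> \<in> space M. Y \<omega> \<le> c} = ?Z -` {..(c - m) / \<sigma>} \<inter> space M"
    using \<open>0 < \<sigma>\<close> by (auto simp: divide_right_mono le_divide_eq)
  also have "prob \<dots> = measure (distr M lborel ?Z) {..(c - m) / \<sigma>}"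
    using distributed_measurable[OF Z] by (simp add: measure_distr)
  also have "\<dots> = Phi ((c - m) / \<sigma>)"
    unfolding distributed_distr_eq_density[OF Z] by (simp add: Phi_def)
  finally show ?thesis .
qed

lemma AnyPwr_le_1:
  assumes "prob_space M"
  shows "AnyPwr M I X c \<le> 1"
  unfolding AnyPwr_def by (rule prob_space.prob_le_1[OF assms])

lemma AnyPwr_ge_single_power:
  assumes "prob_space M" "jointly_gaussian M J X mu C" "finite J" "I \<subseteq> J" "k \<in> I" "C k k = 1"
  shows "1 - Phi (c - mu k) \<le> AnyPwr M I X c"
proof -
  interpret prob_space M by fact
  have X_measurable: "X i \<in> borel_measurable M" if "i \<in> J" for i
    using assms(2) that by (simp add: jointly_gaussian_def)
  have events: "{\<omega> \<in> space M. c < X i \<omega>} \<in> events" if "i \<in> J" for i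
    using X_measurable[OF that] by simp
  have [measurable]: "X k \<in> borel_measurable M"
    using X_measurable assms(4,5) by blast
  have "distributed M lborel (X k) (normal_density (mu k) 1)"
    using jointly_gaussian_component[OF assms(2,3), of k] assms(4-6) by (simp add: subset_iff)
  then have "prob {\<omega> \<in> space M. X k \<omega> \<le> c} = Phi (c - mu k)"
    by (simp add: normal_distributed_prob_le)
  moreover have "{\<omega> \<in> space M. \<exists>i\<in>I. c < X i \<omega>} \<in> events"
  proof -
    have "{\<omega> \<in> space M. \<exists>i\<in>I. c < X i \<omega>} = (\<Union>i\<in>I. {\<omega> \<in> space M. c < X i \<omega>})"
      by auto
    then show ?thesis
      using events assms(4) finite_subset[OF assms(4,3)] by (simp add: subset_iff sets.finite_UN)
  qed
  then have "prob (space M - {\<omega> \<in> space M. X k \<omega> \<le> c}) \<le> AnyPwr M I X c"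
    unfolding AnyPwr_def using assms(5) by (intro finite_measure_mono) (auto simp: not_le)
  moreover have "prob (space M - {\<omega> \<in> space M. X k \<omega> \<le> c}) = 1 - prob {\<omega> \<in> space M. X k \<omega> \<le> c}"
    by (intro prob_compl) measurable
  ultimately show ?thesis
    by linarith
qed

lemma AnyPwr_tendsto_1:
  fixes M :: "nat \<Rightarrow> 'a measure" and X :: "nat \<Rightarrow> nat \<Rightarrow> 'a \<Rightarrow> real"
  assumes "\<And>n. prob_space (M n)" "\<And>n. jointly_gaussian (M n) {1..n} (X n) (mu n) C" "\<And>k. C k k = 1"
    and "\<And>n. I n \<subseteq> {1..n}" "\<forall>\<^sub>F n in sequentially. I n \<noteq> {}"
    and gap: "filterlim (\<lambda>n. Max (mu n ` I n) - c n) at_top sequentially"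
  shows "(\<lambda>n. AnyPwr (M n) (I n) (X n) (c n)) \<longlonglongrightarrow> 1"
proof (rule tendsto_sandwich)
  have "filterlim (\<lambda>n. c n - Max (mu n ` I n)) at_bot sequentially"
    using gap by (simp add: filterlim_uminus_at_bot)
  then have "(\<lambda>n. 1 - Phi (c n - Max (mu n ` I n))) \<longlonglongrightarrow> 1 - 0"
    by (intro tendsto_diff tendsto_const filterlim_compose[OF Phi_at_bot])
  then show "(\<lambda>n. 1 - Phi (c n - Max (mu n ` I n))) \<longlonglongrightarrow> 1"
    by simp
  show "\<forall>\<^sub>F n in sequentially. 1 - Phi (c n - Max (mu n ` I n)) \<le> AnyPwr (M n) (I n) (X n) (c n)"
    using assms(5)
  proof eventually_elim
    case (elim n)
    have "finite (I n)"
      using assms(4) finite_subset by blast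
    then have "Max (mu n ` I n) \<in> mu n ` I n"
      using elim by (intro Max_in) auto
    then obtain k where "k \<in> I n" "mu n k = Max (mu n ` I n)"
      by auto
    then show ?case
      using AnyPwr_ge_single_power[OF assms(1,2) _ assms(4) \<open>k \<in> I n\<close> assms(3)] by simp
  qed
  show "\<forall>\<^sub>F n in sequentially. AnyPwr (M n) (I n) (X n) (c n) \<le> 1"
    using AnyPwr_le_1[OF assms(1)] by simp
qed simp

lemma filterlim_at_top_of_le_mult:
  fixes g m :: "'a \<Rightarrow> real"
  assumes "filterlim g at_top F" "\<forall>\<^sub>F x in F. g x \<le> q * m x" "0 < q"
  shows "filterlim m at_top F"
proof (rule filterlim_at_top_mono)
  show "filterlim (\<lambda>x. 1 / q * g x) at_top F"
    using assms by (intro filterlim_tendsto_pos_mult_at_top[OF tendsto_const]) auto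
  show "\<forall>\<^sub>F x in F. 1 / q * g x \<le> m x"
    using assms(2) by eventually_elim (use \<open>0 < q\<close> in \<open>simp add: field_simps\<close>)
qed

lemma eventually_le_mult_of_ratio_tendsto:
  fixes N :: "nat \<Rightarrow> nat"
  assumes "(\<lambda>n. real (N n) / real n) \<longlonglongrightarrow> p" "0 < p"
  shows "\<forall>\<^sub>F n in sequentially. real n \<le> 2 / p * real (N n)"
proof -
  have "\<forall>\<^sub>F n in sequentially. p / 2 < real (N n) / real n"
    using assms(1) by (rule order_tendstoD(1)) (use \<open>0 < p\<close> in simp)
  then show ?thesis
    using eventually_gt_at_top[of 0] by eventually_elim (use \<open>0 < p\<close> in \<open>auto simp: field_simps\<close>)
qed

lemma signal_minus_cutoff_at_top:
  fixes N :: "nat \<Rightarrow> nat" and m c :: "nat \<Rightarrow> real"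
  assumes N_at_top: "filterlim (\<lambda>n. real (N n)) at_top sequentially"
    and N_ratio: "(\<lambda>n. real (N n) / real n) \<longlonglongrightarrow> p" "0 < p"
    and m_pos: "\<forall>\<^sub>F n in sequentially. 0 < m n"
    and signal: "(\<lambda>n. sqrt (2 * ln (real (N n))) / m n) \<longlonglongrightarrow> L" "L < 1"
    and cutoff: "\<forall>\<^sub>F n in sequentially. c n \<le> sqrt (2 * ln (real n)) + K"
  shows "filterlim (\<lambda>n. m n - c n) at_top sequentially"
proof -
  define q where "q = (max L 0 + 1) / 2"
  have q: "0 < q" "q < 1" "L < q"
    using signal(2) by (auto simp: q_def max_def)
  define r where "r = 2 / p"
  have "0 < r"
    using \<open>0 < p\<close> by (simp add: r_def)
  have ratio: "\<forall>\<^sub>F n in sequentially. real n \<le> r * real (N n)"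
    unfolding r_def by (rule eventually_le_mult_of_ratio_tendsto[OF N_ratio])
  define K' where "K' = sqrt (2 * \<bar>ln r\<bar>) + K"
  have below: "\<forall>\<^sub>F n in sequentially. sqrt (2 * ln (real (N n))) < q * m n"
    using order_tendstoD(2)[OF signal(1) \<open>L < q\<close>] m_pos
    by eventually_elim (simp add: divide_less_eq mult.commute)
  have "filterlim (\<lambda>n. sqrt (2 * ln (real (N n)))) at_top sequentially"
    by (rule filterlim_compose[OF _ N_at_top]) real_asymp
  moreover have "\<forall>\<^sub>F n in sequentially. sqrt (2 * ln (real (N n))) \<le> q * m n"
    using below by (rule eventually_mono) simp
  ultimately have "filterlim m at_top sequentially"
    using q(1) by (rule filterlim_at_top_of_le_mult)
  then have "filterlim (\<lambda>n. - K' + (1 - q) * m n) at_top sequentially"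
    using q by (intro filterlim_tendsto_add_at_top[OF tendsto_const] filterlim_tendsto_pos_mult_at_top[OF tendsto_const]) auto
  moreover have "\<forall>\<^sub>F n in sequentially. - K' + (1 - q) * m n \<le> m n - c n"
    using below cutoff ratio eventually_ge_at_top[of 1]
      filterlim_at_top[THEN iffD1, OF N_at_top, rule_format, of 1]
  proof eventually_elim
    case (elim n)
    then have "ln (real n) \<le> ln (r * real (N n))"
      by (intro ln_mono) auto
    then have "c n \<le> sqrt (2 * ln (r * real (N n))) + K"
      using elim(2) by (smt (verit) real_sqrt_le_mono)
    also have "\<dots> \<le> sqrt (2 * ln (real (N n))) + K'"
      using sqrt_ln_mult_le[OF \<open>0 < r\<close> elim(5)] by (simp add: K'_def)
    finally show ?case
      using elim(1) by (simp add: algebra_simps)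
  qed
  ultimately show ?thesis
    by (rule filterlim_at_top_mono)
qed

theorem theorem4p1:
  fixes \<alpha> :: real and \<rho> :: "nat \<Rightarrow> nat \<Rightarrow> real"
    and M :: "nat \<Rightarrow> 'a measure" and X :: "nat \<Rightarrow> nat \<Rightarrow> 'a \<Rightarrow> real"
    and \<mu> :: "nat \<Rightarrow> nat \<Rightarrow> real" and p1 :: real
  defines "I1 \<equiv> (\<lambda>n. {i \<in> {1..n}. \<mu> n i > 0})"
  defines "n1 \<equiv> (\<lambda>n. card (I1 n))"
  defines "mu_max \<equiv> (\<lambda>n. Max (\<mu> n ` I1 n))"
  assumes alpha: "0 < \<alpha>" "\<alpha> < 1"
    and rho_sym: "\<And>i j. \<rho> i j = \<rho> j i"
    and rho_diag: "\<And>i. \<rho> i i = 1"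
    and rho_off: "\<And>i j. i \<noteq> j \<Longrightarrow> \<bar>\<rho> i j\<bar> < 1"
    and rho_psd: "\<And>n. psd_on n \<rho>"
    and weak_dep1: "(SUP m\<in>{1..}. rho_lag \<rho> m) < 1"
    and weak_dep2: "(\<lambda>m. rho_lag \<rho> m * ln (real m)) \<longlonglongrightarrow> 0"
    and prob: "\<And>n. prob_space (M n)"
    and gauss: "\<And>n. jointly_gaussian (M n) {1..n} (X n) (\<mu> n) \<rho>"
    and mu_nonneg: "\<And>n i. i \<in> {1..n} \<Longrightarrow> \<mu> n i \<ge> 0"
    and n1_inf: "filterlim (\<lambda>n. real (n1 n)) at_top sequentially"
    and p1: "0 < p1" "p1 \<le> 1"
    and n1_ratio: "(\<lambda>n. real (n1 n) / real n) \<longlonglongrightarrow> p1"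
    and signal: "\<exists>L < 1. (\<lambda>n. sqrt (2 * ln (real (n1 n))) / mu_max n) \<longlonglongrightarrow> L"
  shows "(\<lambda>n. AnyPwr (M n) (I1 n) (X n) (c_Bon n \<alpha>)) \<longlonglongrightarrow> 1 \<and>
         (\<lambda>n. AnyPwr (M n) (I1 n) (X n) (c_Sid n \<alpha>)) \<longlonglongrightarrow> 1"
proof -
  obtain L where L: "L < 1" "(\<lambda>n. sqrt (2 * ln (real (n1 n))) / mu_max n) \<longlonglongrightarrow> L"
    using signal by blast
  have I1_sub: "I1 n \<subseteq> {1..n}" for n
    by (auto simp: I1_def)
  have I1_ne: "\<forall>\<^sub>F n in sequentially. I1 n \<noteq> {}"
    using filterlim_at_top[THEN iffD1, OF n1_inf, rule_format, of 1] by eventually_elim (auto simp: n1_def)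
  have mu_max_pos: "\<forall>\<^sub>F n in sequentially. 0 < mu_max n"
    using I1_ne
  proof eventually_elim
    case (elim n)
    then have "mu_max n \<in> \<mu> n ` I1 n"
      unfolding mu_max_def using finite_subset[OF I1_sub] by (intro Max_in) auto
    then show ?case
      by (auto simp: I1_def)
  qed
  have power_1: "(\<lambda>n. AnyPwr (M n) (I1 n) (X n) (c n)) \<longlonglongrightarrow> 1"
    if cutoff: "\<exists>K. \<forall>\<^sub>F n in sequentially. c n \<le> sqrt (2 * ln (real n)) + K" for c
  proof (rule AnyPwr_tendsto_1[OF prob gauss rho_diag I1_sub I1_ne])
    obtain K where "\<forall>\<^sub>F n in sequentially. c n \<le> sqrt (2 * ln (real n)) + K"
      using cutoff by blast
    then show "filterlim (\<lambda>n. Max (\<mu> n ` I1 n) - c n) at_top sequentially"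
      using signal_minus_cutoff_at_top[OF n1_inf n1_ratio p1(1) mu_max_pos L(2,1)]
      by (simp add: mu_max_def)
  qed
  show ?thesis
    using alpha by (intro conjI power_1 c_Bon_le_sqrt_two_ln c_Sid_le_sqrt_two_ln)
qed

end
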